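(* There is a universal constant $c>0$ such that: for any even integer $n\ge2$, any integer $k>1$, and any reals $G,\lambda>0$ with $G\ge 4\lambda$, there exist functions $f_1,\dots,f_n$ on $\mathbb{R}$ and an initialization $x_0$ satisfying Assumption (A) with parameters $n,\lambda,G$, such that for every step size $0<\eta\le\frac{1}{100\lambda n^2}$, SGD with random reshuffling satisfies \[ \mathbb{E}\Big[F(x_k)-\inf_xF(x)\Big]\;\ge\;c\cdot\min\left\{\lambda,\ \frac{G^2}{\lambda(nk)^2}\right\}. \]
   Context: Assumption (A) (parameters $n\ge 2$, $\lambda>0$, $G>0$, on $\mathbb{R}^d$): $F(x)=\frac1n\sum_{i=1}^n f_i(x)$, where each $f_i:\mathbb{R}^d\to\mathbb{R}$ is a convex quadratic function $f_i(x)=x^\top A_ix+b_i^\top x$ (with $A_i$ symmetric positive semidefinite); $F$ is $\lambda$-strongly convex with unique minimizer $x^*$; each $\nabla f_i$ is $L$-Lipschitz for some $L\le 3\lambda$; each $f_i$ satisfies $\|\nabla f_i(x)\|\le G$ for all $x$ with $\|x-x^*\|\le 1$; and the initialization satisfies $\|x_0-x^*\|\le 1$. SGD with random reshuffling with constant step size $\eta$: for each of $k$ epochs, a fresh uniformly random permutation $\pi$ of $\{1,\dots,n\}$ (independent across epochs) is drawn and the updates $x\leftarrow x-\eta\nabla f_{\pi(j)}(x)$, $j=1,\dots,n$, are performed; $x_t$ is the iterate at the end of epoch $t$. *)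

theory Defs
  imports "HOL-Probability.Probability"
begin

text \<open>Setting: d = 1 (functions on the reals). Components are indexed by {0..<n}.\<close>

definition avg_fun :: "nat \<Rightarrow> (nat \<Rightarrow> real \<Rightarrow> real) \<Rightarrow> real \<Rightarrow> real" where
  "avg_fun n f x = (\<Sum>i<n. f i x) / real n"

definition convex_quadratic :: "(real \<Rightarrow> real) \<Rightarrow> bool" where
  "convex_quadratic g \<longleftrightarrow> (\<exists>a b. a \<ge> 0 \<and> g = (\<lambda>x. a * x\<^sup>2 + b * x))"

definition strongly_convex_on_reals :: "real \<Rightarrow> (real \<Rightarrow> real) \<Rightarrow> bool" where
  "strongly_convex_on_reals lam F \<longleftrightarrow>
     (\<forall>x y t. 0 \<le> t \<and> t \<le> 1 \<longrightarrow>
        F (t * x + (1 - t) * y) \<le> t * F x + (1 - t) * F y - lam / 2 * t * (1 - t) * (x - y)\<^sup>2)"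

definition unique_minimizer :: "(real \<Rightarrow> real) \<Rightarrow> real \<Rightarrow> bool" where
  "unique_minimizer F xs \<longleftrightarrow> (\<forall>y. F xs \<le> F y) \<and> (\<forall>y. (\<forall>z. F y \<le> F z) \<longrightarrow> y = xs)"

definition assumption_A ::
  "nat \<Rightarrow> real \<Rightarrow> real \<Rightarrow> (nat \<Rightarrow> real \<Rightarrow> real) \<Rightarrow> real \<Rightarrow> bool" where
  "assumption_A n lam G f x0 \<longleftrightarrow>
     (\<forall>i<n. convex_quadratic (f i)) \<and>
     strongly_convex_on_reals lam (avg_fun n f) \<and>
     (\<exists>L \<le> 3 * lam. \<forall>i<n. L-lipschitz_on UNIV (deriv (f i))) \<and>
     (\<exists>xs. unique_minimizer (avg_fun n f) xs \<and>
        (\<forall>i<n. \<forall>x. \<bar>x - xs\<bar> \<le> 1 \<longrightarrow> \<bar>deriv (f i) x\<bar> \<le> G) \<and>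
        \<bar>x0 - xs\<bar> \<le> 1)"

definition sgd_epoch :: "nat \<Rightarrow> (nat \<Rightarrow> real \<Rightarrow> real) \<Rightarrow> real \<Rightarrow> (nat \<Rightarrow> nat) \<Rightarrow> real \<Rightarrow> real" where
  "sgd_epoch n f eta \<sigma> x = foldl (\<lambda>y j. y - eta * deriv (f (\<sigma> j)) y) x [0..<n]"

text \<open>Iterate after t epochs, with ps t the permutation used in epoch t+1.\<close>
fun sgd_rr :: "nat \<Rightarrow> (nat \<Rightarrow> real \<Rightarrow> real) \<Rightarrow> real \<Rightarrow> (nat \<Rightarrow> nat \<Rightarrow> nat) \<Rightarrow> real \<Rightarrow> nat \<Rightarrow> real" where
  "sgd_rr n f eta ps x0 0 = x0"
| "sgd_rr n f eta ps x0 (Suc t) = sgd_epoch n f eta (ps t) (sgd_rr n f eta ps x0 t)"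

definition perm_seq_pmf :: "nat \<Rightarrow> nat \<Rightarrow> (nat \<Rightarrow> nat \<Rightarrow> nat) pmf" where
  "perm_seq_pmf n k = pmf_of_set (PiE {..<k} (\<lambda>_. {\<sigma>. \<sigma> permutes {..<n}}))"

end

theory Submission imports Defs begin

text \<open>
  Take \<open>n = 2m\<close> components: \<open>m\<close> linear ones \<open>G x / 2\<close> and \<open>m\<close> quadratic ones \<open>\<lambda> x\<^sup>2\<close>, so that
  \<open>F x = \<lambda> x\<^sup>2 / 2 + G x / 4\<close>. An epoch with permutation \<open>\<sigma>\<close> is the affine map
  \<open>x \<mapsto> Q x + c \<sigma>\<close> with \<open>Q = (1 - 2\<eta>\<lambda>)\<^sup>m\<close>; the translation \<open>c \<sigma>\<close> depends on how many contraction
  steps follow each linear step. Pairing \<open>\<sigma>\<close> with its reversal shows that on average the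
  translation is no larger than that of the "balanced" order, whose fixed point lies a distance
  of order \<open>\<eta> G\<close> to the right of the minimizer. Hence the mean iterate stays to the right of the
  minimizer by at least that bias (or by the not yet contracted initial distance), and Jensen's
  inequality transfers this bound on the mean to the expected squared distance.
\<close>

definition hard_component :: "nat \<Rightarrow> real \<Rightarrow> real \<Rightarrow> nat \<Rightarrow> real \<Rightarrow> real" where
  "hard_component m lam G i = (if i < m then (\<lambda>x. G/2 * x) else (\<lambda>x. lam * x^2))"

lemma deriv_hard_component:
  "deriv (hard_component m lam G i) = (\<lambda>x. if i < m then G/2 else 2*lam*x)"
proof
  fix x
  have "((\<lambda>x. G/2 * x) has_real_derivative G/2) (at x)"
       "((\<lambda>x. lam * x^2) has_real_derivative 2*lam*x) (at x)"
    by (auto intro!: derivative_eq_intros)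
  then show "deriv (hard_component m lam G i) x = (if i < m then G/2 else 2*lam*x)"
    by (simp add: hard_component_def DERIV_imp_deriv)
qed

lemma avg_fun_hard_component:
  assumes "n = 2*m" "0 < m"
  shows "avg_fun n (hard_component m lam G) x = lam/2*x^2 + G/4*x"
proof -
  have "(\<Sum>i<n. hard_component m lam G i x) = (\<Sum>i<m. G/2*x) + (\<Sum>i\<in>{m..<n}. lam*x^2)"
  proof -
    have "{..<n} \<inter> {i. i < m} = {..<m}" "{..<n} \<inter> - {i. i < m} = {m..<n}"
      using assms by auto
    then show ?thesis
      by (simp add: hard_component_def if_distrib[of "\<lambda>f. f x"] sum.If_cases)
  qed
  then show ?thesis
    using assms unfolding avg_fun_def by (simp add: field_simps)
qed

context
  fixes F :: "real \<Rightarrow> real" and xs lam :: real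
  assumes F_eq: "\<And>x. F x = F xs + lam/2 * (x - xs)\<^sup>2" and lam_pos: "0 < lam"
begin

lemma strongly_convex_on_reals_quadratic: "strongly_convex_on_reals lam F"
  unfolding strongly_convex_on_reals_def
proof (intro allI impI)
  fix x y t :: real
  show "F (t * x + (1 - t) * y) \<le> t * F x + (1 - t) * F y - lam / 2 * t * (1 - t) * (x - y)\<^sup>2"
  proof -
    have "lam/2 * (t * x + (1 - t) * y - xs)\<^sup>2
        = t * (lam/2 * (x - xs)\<^sup>2) + (1 - t) * (lam/2 * (y - xs)\<^sup>2) - lam/2 * t * (1 - t) * (x - y)\<^sup>2"
      by (simp add: field_simps power2_eq_square)
    then show ?thesis
      using F_eq[of "t * x + (1 - t) * y"] F_eq[of x] F_eq[of y] by (simp add: algebra_simps)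
  qed
qed

lemma unique_minimizer_quadratic: "unique_minimizer F xs"
  unfolding unique_minimizer_def
proof (intro conjI allI impI)
  fix y
  show "F xs \<le> F y" using F_eq[of y] lam_pos by simp
  assume "\<forall>z. F y \<le> F z"
  then have "F y \<le> F xs" by blast
  then have "lam/2 * (y - xs)\<^sup>2 \<le> 0" using F_eq[of y] by linarith
  then show "y = xs" using lam_pos by (simp add: mult_le_0_iff)
qed

lemma INF_quadratic: "(INF x. F x) = F xs"
proof (rule cInf_eq_minimum)
  fix y assume "y \<in> range F"
  then obtain x where "y = F x" by auto
  then show "F xs \<le> y" using F_eq[of x] lam_pos by simp
qed simp

end

lemma avg_fun_hard_component_eq:
  assumes "n = 2*m" "0 < m" "0 < lam"
  shows "avg_fun n (hard_component m lam G) x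
    = avg_fun n (hard_component m lam G) (- G/(4*lam)) + lam/2 * (x - - G/(4*lam))\<^sup>2"
  using assms by (simp add: avg_fun_hard_component field_simps power2_eq_square)

lemma assumption_A_hard_component:
  assumes n: "n = 2*m" "0 < m" and lam: "0 < lam" and "0 < G" "4*lam \<le> G"
  shows "assumption_A n lam G (hard_component m lam G) (- G/(4*lam) + 1)"
proof -
  let ?xs = "- G/(4*lam)"
  note F_eq = avg_fun_hard_component_eq[OF n lam, of G]
  have "convex_quadratic (hard_component m lam G i)" for i
  proof (cases "i < m")
    case True
    then show ?thesis unfolding convex_quadratic_def hard_component_def
      by (intro exI[of _ 0] exI[of _ "G/2"]) auto
  next
    case False
    then show ?thesis unfolding convex_quadratic_def hard_component_def
      using lam by (intro exI[of _ lam] exI[of _ 0]) auto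
  qed
  moreover have "(2*lam)-lipschitz_on UNIV (deriv (hard_component m lam G i))" for i
    using lam by (intro lipschitz_onI)
      (auto simp: deriv_hard_component dist_real_def abs_mult right_diff_distrib[symmetric])
  moreover have "\<bar>deriv (hard_component m lam G i) x\<bar> \<le> G" if "\<bar>x - ?xs\<bar> \<le> 1" for i x
  proof -
    have "0 \<le> G/(4*lam)" using \<open>0 < G\<close> lam by simp
    then have "\<bar>x\<bar> \<le> G/(4*lam) + 1" using that by linarith
    then have "2*lam*\<bar>x\<bar> \<le> 2*lam*(G/(4*lam) + 1)" using lam by simp
    also have "\<dots> = G/2 + 2*lam" using lam by (simp add: field_simps)
    finally show ?thesis using \<open>0 < G\<close> \<open>4*lam \<le> G\<close> lam by (simp add: deriv_hard_component abs_mult)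
  qed
  moreover have "2*lam \<le> 3*lam" using lam by simp
  ultimately show ?thesis
    unfolding assumption_A_def
    using strongly_convex_on_reals_quadratic[OF F_eq lam] unique_minimizer_quadratic[OF F_eq lam]
    by (intro conjI exI[of _ "2*lam"] exI[of _ ?xs]) auto
qed

fun shift_weight :: "real \<Rightarrow> bool list \<Rightarrow> real" where
  "shift_weight q [] = 0"
| "shift_weight q (b # ws) = shift_weight q ws + (if b then q ^ length (filter Not ws) else 0)"

text \<open>In a word, \<open>True\<close> stands for a step on a linear component (translation by \<open>-g\<close>) and
  \<open>False\<close> for one on a quadratic component (scaling by \<open>q\<close>).\<close>
lemma foldl_translate_scale:
  "foldl (\<lambda>y b. if b then y - g else q * y) y ws
    = q ^ length (filter Not ws) * y - g * shift_weight q ws"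
proof (induction ws arbitrary: y)
  case (Cons b ws)
  then show ?case
    using Cons.IH[of "if b then y - g else q * y"] by (cases b) (auto simp: algebra_simps)
qed simp

lemma shift_weight_append_True: "shift_weight q (ws @ [True]) = shift_weight q ws + 1"
  by (induction ws) auto

lemma shift_weight_append_False: "shift_weight q (ws @ [False]) = q * shift_weight q ws"
  by (induction ws) (auto simp: algebra_simps)

lemma shift_weight_ge:
  assumes "0 \<le> q" "q \<le> 1"
  shows "real (length (filter (\<lambda>b. b) ws)) * q ^ length (filter Not ws) \<le> shift_weight q ws"
proof (induction ws)
  case (Cons b ws)
  have "q ^ Suc (length (filter Not ws)) \<le> q ^ length (filter Not ws)"
    using assms by (simp add: mult_left_le_one_le)
  then have "real (length (filter (\<lambda>b. b) ws)) * q ^ Suc (length (filter Not ws))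
      \<le> real (length (filter (\<lambda>b. b) ws)) * q ^ length (filter Not ws)"
    by (rule mult_left_mono) simp
  then show ?case
    using Cons by (auto simp: algebra_simps)
qed simp

text \<open>Traversing a word backwards moves every translation behind the scalings it used to
  precede, so the two weights together are at most those of a word whose translations all
  come first plus one whose translations all come last.\<close>
lemma shift_weight_plus_rev_le:
  assumes "0 \<le> q" "q \<le> 1"
  shows "shift_weight q ws + shift_weight q (rev ws)
    \<le> real (length (filter (\<lambda>b. b) ws)) * (1 + q ^ length (filter Not ws))"
proof (induction ws)
  case (Cons b ws)
  show ?case
  proof (cases b)
    case False
    have "real (length (filter (\<lambda>b. b) ws)) * q ^ length (filter Not ws) \<le> shift_weight q (rev ws)"
      using shift_weight_ge[OF assms, of "rev ws"] by (simp add: rev_filter[symmetric])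
    then have "(1 - q) * (real (length (filter (\<lambda>b. b) ws)) * q ^ length (filter Not ws))
        \<le> (1 - q) * shift_weight q (rev ws)"
      using assms by (intro mult_left_mono) auto
    then show ?thesis
      using Cons False by (simp add: shift_weight_append_False algebra_simps)
  qed (use Cons in \<open>simp add: shift_weight_append_True algebra_simps\<close>)
qed simp

definition reverse_perm :: "nat \<Rightarrow> (nat \<Rightarrow> nat) \<Rightarrow> nat \<Rightarrow> nat" where
  "reverse_perm n \<sigma> = (\<lambda>j. if j < n then \<sigma> (n - 1 - j) else j)"

lemma permutes_reverse_perm:
  assumes "\<sigma> permutes {..<n}" shows "reverse_perm n \<sigma> permutes {..<n}"
proof (rule bij_imp_permutes)
  have "bij_betw (\<lambda>j. n - 1 - j) {..<n} {..<n}"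
    by (rule bij_betw_byWitness[where f'="\<lambda>j. n - 1 - j"]) auto
  then have "bij_betw (\<sigma> \<circ> (\<lambda>j. n - 1 - j)) {..<n} {..<n}"
    using permutes_imp_bij[OF assms] by (rule bij_betw_trans)
  then show "bij_betw (reverse_perm n \<sigma>) {..<n} {..<n}"
    by (rule bij_betw_cong[THEN iffD1, rotated]) (auto simp: reverse_perm_def)
qed (auto simp: reverse_perm_def)

lemma reverse_perm_reverse_perm:
  assumes "\<sigma> permutes {..<n}" shows "reverse_perm n (reverse_perm n \<sigma>) = \<sigma>"
  using permutes_not_in[OF assms] by (auto simp: reverse_perm_def)

lemma map_reverse_perm:
  "map (\<lambda>j. g (reverse_perm n \<sigma> j)) [0..<n] = rev (map (\<lambda>j. g (\<sigma> j)) [0..<n])"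
  by (rule nth_equalityI) (auto simp: reverse_perm_def rev_nth)

lemma length_filter_map_permutes:
  assumes "\<sigma> permutes {..<n}"
  shows "length (filter P (map (\<lambda>j. g (\<sigma> j)) [0..<n])) = length (filter P (map g [0..<n]))"
proof -
  have image: "\<sigma> ` {j. j < n \<and> P (g (\<sigma> j))} = {i. i < n \<and> P (g i)}"
  proof (intro equalityI subsetI)
    fix i assume "i \<in> {i. i < n \<and> P (g i)}"
    moreover have "inv \<sigma> i < n" "\<sigma> (inv \<sigma> i) = i"
      using calculation permutes_in_image[OF permutes_inv[OF assms]] permutes_inverses(1)[OF assms]
      by auto
    ultimately show "i \<in> \<sigma> ` {j. j < n \<and> P (g (\<sigma> j))}"
      by (metis (mono_tags, lifting) image_eqI mem_Collect_eq)
  qed (use permutes_in_image[OF assms] in auto)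
  have "bij_betw \<sigma> {j. j < n \<and> P (g (\<sigma> j))} {i. i < n \<and> P (g i)}"
    by (rule bij_betw_subset[OF permutes_imp_bij[OF assms] _ image]) auto
  moreover have "length (filter P (map h [0..<n])) = card {j. j < n \<and> P (h j)}" for h
    unfolding length_filter_conv_card by (rule arg_cong[where f=card]) auto
  ultimately show ?thesis
    by (simp add: bij_betw_same_card)
qed

lemma length_filter_map_less_upt:
  "length (filter (\<lambda>b. b) (map (\<lambda>i. i < m) [0..<2*m])) = m"
  "length (filter Not (map (\<lambda>i. i < m) [0..<2*m])) = m"
proof -
  have "[0..<2*m] = [0..<m] @ [m..<m+m]"
    by (simp add: mult_2 upt_add_eq_append[of 0 m m])
  then show "length (filter (\<lambda>b. b) (map (\<lambda>i. i < m) [0..<2*m])) = m"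
    "length (filter Not (map (\<lambda>i. i < m) [0..<2*m])) = m"
    by (simp_all add: filter_True filter_False)
qed

lemma sgd_epoch_hard_component:
  assumes n: "n = 2*m" and \<sigma>: "\<sigma> permutes {..<n}"
  shows "sgd_epoch n (hard_component m lam G) eta \<sigma> x
    = (1 - 2*eta*lam) ^ m * x - eta*G/2 * shift_weight (1 - 2*eta*lam) (map (\<lambda>j. \<sigma> j < m) [0..<n])"
proof -
  have "sgd_epoch n (hard_component m lam G) eta \<sigma> x
      = foldl (\<lambda>y b. if b then y - eta*G/2 else (1 - 2*eta*lam) * y) x (map (\<lambda>j. \<sigma> j < m) [0..<n])"
    unfolding sgd_epoch_def foldl_map
    by (rule arg_cong[where f="\<lambda>h. foldl h x [0..<n]"]) (auto simp: fun_eq_iff deriv_hard_component algebra_simps)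
  moreover have "length (filter Not (map (\<lambda>j. \<sigma> j < m) [0..<n])) = m"
    using length_filter_map_permutes[OF \<sigma>, of Not "\<lambda>i. i < m"] length_filter_map_less_upt n by simp
  ultimately show ?thesis
    by (simp add: foldl_translate_scale)
qed

lemma shift_weight_reverse_perm_le:
  assumes n: "n = 2*m" and \<sigma>: "\<sigma> permutes {..<n}" and "0 \<le> q" "q \<le> 1"
  shows "shift_weight q (map (\<lambda>j. \<sigma> j < m) [0..<n])
      + shift_weight q (map (\<lambda>j. reverse_perm n \<sigma> j < m) [0..<n])
    \<le> real m * (1 + q ^ m)"
  using shift_weight_plus_rev_le[OF assms(3,4), of "map (\<lambda>j. \<sigma> j < m) [0..<n]"]
    length_filter_map_permutes[OF \<sigma>, of _ "\<lambda>i. i < m"] length_filter_map_less_upt n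
  by (simp add: map_reverse_perm[of "\<lambda>i. i < m"])

lemma sgd_rr_affine:
  assumes "\<forall>s<t. ps s permutes {..<n}"
    and "\<And>\<sigma> x. \<sigma> permutes {..<n} \<Longrightarrow> sgd_epoch n f eta \<sigma> x = Q * x + c \<sigma>"
  shows "sgd_rr n f eta ps x0 t = Q^t * x0 + (\<Sum>s<t. Q^(t - Suc s) * c (ps s))"
  using assms(1)
proof (induction t)
  case (Suc t)
  have "Q * Q^(t - Suc s) = Q^(t - s)" if "s < t" for s
    using that by (simp flip: power_Suc add: Suc_diff_Suc)
  then have "(\<Sum>s<t. Q * (Q^(t - Suc s) * c (ps s))) = (\<Sum>s<t. Q^(Suc t - Suc s) * c (ps s))"
    by (intro sum.cong) auto
  with Suc assms(2) show ?case
    by (simp add: sum_distrib_left algebra_simps)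
qed simp

lemma sum_ge_of_involution:
  assumes "\<And>x. x \<in> S \<Longrightarrow> R x \<in> S" "\<And>x. x \<in> S \<Longrightarrow> R (R x) = x"
    and "\<And>x. x \<in> S \<Longrightarrow> 2 * B \<le> X x + X (R x)"
  shows "real (card S) * B \<le> sum X S"
proof -
  have "(\<Sum>x\<in>S. X (R x)) = sum X S"
    by (rule sum.reindex_bij_witness[where i=R and j=R]) (use assms in auto)
  moreover have "(\<Sum>x\<in>S. 2 * B) \<le> (\<Sum>x\<in>S. X x + X (R x))"
    by (rule sum_mono) (rule assms(3))
  ultimately show ?thesis
    by (simp add: sum.distrib)
qed

lemma sum_squares_ge_of_sum_ge:
  fixes Y :: "'a \<Rightarrow> real"
  assumes "real (card S) * T \<le> sum Y S" "0 \<le> T"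
  shows "real (card S) * T^2 \<le> (\<Sum>x\<in>S. (Y x)^2)"
proof (cases "card S = 0")
  case False
  have "(real (card S) * T)^2 \<le> (sum Y S)^2"
    using assms by (intro power_mono) auto
  also have "\<dots> \<le> (\<Sum>x\<in>S. (Y x)^2) * real (card S)"
    by (rule sum_squared_le_sum_of_squares)
  finally show ?thesis
    using False by (simp add: power2_eq_square algebra_simps)
qed (simp add: sum_nonneg)

definition perm_seqs :: "nat \<Rightarrow> nat \<Rightarrow> (nat \<Rightarrow> nat \<Rightarrow> nat) set" where
  "perm_seqs n k = PiE {..<k} (\<lambda>_. {\<sigma>. \<sigma> permutes {..<n}})"

lemma card_perm_seqs_pos: "0 < card (perm_seqs n k)"
proof -
  have "(\<lambda>t. if t < k then id else undefined) \<in> perm_seqs n k"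
    by (auto simp: perm_seqs_def PiE_iff permutes_id extensional_def)
  moreover have "finite (perm_seqs n k)"
    unfolding perm_seqs_def by (intro finite_PiE finite_permutations) auto
  ultimately show ?thesis
    by (auto simp: card_gt_0_iff)
qed

lemma expectation_perm_seq_pmf:
  "measure_pmf.expectation (perm_seq_pmf n k) X = (\<Sum>ps\<in>perm_seqs n k. X ps) / card (perm_seqs n k)"
  using card_perm_seqs_pos[of n k] unfolding perm_seq_pmf_def perm_seqs_def[symmetric]
  by (intro integral_pmf_of_set) (auto simp: card_gt_0_iff)

text \<open>Applying an involution \<open>\<rho>\<close> of the permutations to every epoch is a bijection of
  \<open>perm_seqs n k\<close>, so the mean iterate is at least the iterate of the epoch map whose
  translation is the pairwise average lower bound \<open>C\<close>.\<close>
lemma sum_sgd_rr_ge: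
  assumes epoch: "\<And>\<sigma> x. \<sigma> permutes {..<n} \<Longrightarrow> sgd_epoch n f eta \<sigma> x = Q * x + c \<sigma>"
    and \<rho>: "\<And>\<sigma>. \<sigma> permutes {..<n} \<Longrightarrow> \<rho> \<sigma> permutes {..<n} \<and> \<rho> (\<rho> \<sigma>) = \<sigma>"
    and pair: "\<And>\<sigma>. \<sigma> permutes {..<n} \<Longrightarrow> 2 * C \<le> c \<sigma> + c (\<rho> \<sigma>)"
    and "0 \<le> Q"
  shows "real (card (perm_seqs n k)) * (Q^k * x0 + C * (\<Sum>s<k. Q^s))
    \<le> (\<Sum>ps\<in>perm_seqs n k. sgd_rr n f eta ps x0 k)"
proof (rule sum_ge_of_involution)
  define R where "R ps = (\<lambda>t. if t < k then \<rho> (ps t) else undefined)" for ps :: "nat \<Rightarrow> nat \<Rightarrow> nat"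
  fix ps assume ps: "ps \<in> perm_seqs n k"
  then have perm: "ps s permutes {..<n}" if "s < k" for s
    using that by (auto simp: perm_seqs_def)
  show "R ps \<in> perm_seqs n k"
    using perm \<rho> by (auto simp: perm_seqs_def R_def)
  show "R (R ps) = ps"
    using perm \<rho> ps by (auto simp: R_def perm_seqs_def PiE_def extensional_def)
  have X: "sgd_rr n f eta ps x0 k = Q^k * x0 + (\<Sum>s<k. Q^(k - Suc s) * c (ps s))"
    using perm by (intro sgd_rr_affine epoch) auto
  have "sgd_rr n f eta (R ps) x0 k = Q^k * x0 + (\<Sum>s<k. Q^(k - Suc s) * c (R ps s))"
    using perm \<rho> by (intro sgd_rr_affine epoch) (auto simp: R_def)
  also have "(\<Sum>s<k. Q^(k - Suc s) * c (R ps s)) = (\<Sum>s<k. Q^(k - Suc s) * c (\<rho> (ps s)))"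
    by (simp add: R_def)
  finally have XR: "sgd_rr n f eta (R ps) x0 k = Q^k * x0 + (\<Sum>s<k. Q^(k - Suc s) * c (\<rho> (ps s)))" .
  have "(\<Sum>s<k. Q^(k - Suc s) * (2 * C)) \<le> (\<Sum>s<k. Q^(k - Suc s) * c (ps s) + Q^(k - Suc s) * c (\<rho> (ps s)))"
    using perm pair \<open>0 \<le> Q\<close> by (intro sum_mono) (simp add: mult_left_mono flip: distrib_left)
  moreover have "(\<Sum>s<k. Q^(k - Suc s) * (2 * C)) = 2 * (C * (\<Sum>s<k. Q^s))"
    by (simp add: sum.nat_diff_reindex flip: sum_distrib_right)
  ultimately show "2 * (Q^k * x0 + C * (\<Sum>s<k. Q^s))
      \<le> sgd_rr n f eta ps x0 k + sgd_rr n f eta (R ps) x0 k"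
    unfolding X XR sum.distrib by (simp add: algebra_simps)
qed

lemma one_minus_power_le:
  assumes "0 \<le> e" "e \<le> 1"
  shows "(1 - e)^m \<le> 1 - real m * e + real m * (real m - 1) / 2 * e^2"
proof (induction m)
  case (Suc m)
  have "(1 - e)^Suc m \<le> (1 - e) * (1 - real m * e + real m * (real m - 1) / 2 * e^2)"
    using Suc assms by (simp add: mult_left_mono)
  also have "\<dots> = 1 - real (Suc m) * e + real (Suc m) * (real (Suc m) - 1) / 2 * e^2
      - real m * (real m - 1) / 2 * e^3"
    by (simp add: field_simps power2_eq_square power3_eq_cube)
  also have "\<dots> \<le> 1 - real (Suc m) * e + real (Suc m) * (real (Suc m) - 1) / 2 * e^2"
    using assms by (cases m) auto
  finally show ?case .
qed simp

lemma bias_ineq_of_taylor_bounds: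
  fixes e m Q :: real
  assumes "0 < e" "1 \<le> m" "m * (m - 1) * e \<le> 1"
    and "1 - m * e \<le> Q" "Q \<le> 1 - m * e + m * (m - 1) / 2 * e^2"
  shows "e * (1 - Q) / 2 \<le> 2 * (1 - Q) - e * m * (1 + Q)"
proof -
  have "2 - e*m - (1 - m*e + m*(m - 1)/2*e^2) * (2 + e*m) \<le> 2 - e*m - Q * (2 + e*m)"
    using assms by (intro diff_mono mult_right_mono) auto
  also have "\<dots> = 2 * (1 - Q) - e * m * (1 + Q)"
    by (simp add: algebra_simps)
  finally have upper: "2 - e*m - (1 - m*e + m*(m - 1)/2*e^2) * (2 + e*m) \<le> 2 * (1 - Q) - e * m * (1 + Q)" .
  have "2 - e*m - (1 - m*e + m*(m - 1)/2*e^2) * (2 + e*m) = m*e^2 * (1 - m*(m - 1)*e/2)"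
    by (simp add: field_simps power2_eq_square)
  moreover have "m*e^2 * (1/2) \<le> m*e^2 * (1 - m*(m - 1)*e/2)"
    using assms by (intro mult_left_mono) auto
  moreover have "e * (1 - Q) \<le> e * (m * e)"
    using assms by (intro mult_left_mono) auto
  then have "e * (1 - Q) / 2 \<le> m*e^2 * (1/2)"
    by (simp add: power2_eq_square algebra_simps)
  ultimately show ?thesis
    using upper by linarith
qed

text \<open>The fixed point of the averaged epoch map lies at least \<open>\<eta> G / 8\<close> to the right of the
  minimizer \<open>- G / (4 \<lambda>)\<close>.\<close>
lemma hard_component_bias_ge:
  fixes m :: nat
  assumes "0 < lam" "0 < G" "0 < eta" "0 < m" "eta \<le> 1 / (400 * lam * real m^2)"
  defines "Q \<equiv> (1 - 2*eta*lam)^m"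
  shows "eta*G/8 \<le> G/(4*lam) - eta*G*m*(1 + Q) / (4*(1 - Q))"
proof -
  define e where "e = 2*eta*lam"
  have e_pos: "0 < e" using assms by (simp add: e_def)
  have e_bound: "e * (200 * real m^2) \<le> 1"
    using assms by (simp add: e_def field_simps)
  have "e * 200 \<le> e * (200 * real m^2)"
    using e_pos \<open>0 < m\<close> by simp
  then have e_le: "e \<le> 1/200"
    using e_bound by linarith
  have "real m * (real m - 1) * e \<le> e * (200 * real m^2)"
    using e_pos \<open>0 < m\<close> by (simp add: power2_eq_square algebra_simps)
  then have "real m * (real m - 1) * e \<le> 1"
    using e_bound by linarith
  moreover have "1 - real m * e \<le> Q" "Q \<le> 1 - real m * e + real m * (real m - 1) / 2 * e^2"
    using Bernoulli_inequality[of "-e" m] one_minus_power_le[of e m] e_pos e_le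
    by (simp_all add: Q_def e_def)
  ultimately have bias: "e * (1 - Q) / 2 \<le> 2 * (1 - Q) - e * m * (1 + Q)"
    using bias_ineq_of_taylor_bounds e_pos \<open>0 < m\<close> by simp
  have "Q < 1"
    unfolding Q_def using e_pos e_le \<open>0 < m\<close> by (simp add: power_less_one_iff e_def)
  have "G/(4*lam) - eta*G*m*(1 + Q) / (4*(1 - Q)) - eta*G/8
      = G/(8*lam*(1 - Q)) * (2*(1 - Q) - e*m*(1 + Q) - e*(1 - Q)/2)"
    using \<open>Q < 1\<close> \<open>0 < lam\<close> by (simp add: e_def field_simps)
  moreover have "0 \<le> G/(8*lam*(1 - Q)) * (2*(1 - Q) - e*m*(1 + Q) - e*(1 - Q)/2)"
    using bias \<open>Q < 1\<close> assms by (intro mult_nonneg_nonneg) auto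
  ultimately show ?thesis by linarith
qed

lemma sum_sgd_rr_hard_component_ge:
  assumes n: "n = 2*m" and "0 < m" "0 < lam" "0 < G" "0 < eta" "2*eta*lam \<le> 1"
  defines "Q \<equiv> (1 - 2*eta*lam)^m"
  shows "real (card (perm_seqs n k)) * (Q^k + (1 - Q^k) * (G/(4*lam) - eta*G*m*(1 + Q) / (4*(1 - Q))))
    \<le> (\<Sum>ps\<in>perm_seqs n k. sgd_rr n (hard_component m lam G) eta ps (- G/(4*lam) + 1) k + G/(4*lam))"
proof -
  define q where "q = 1 - 2*eta*lam"
  define c where "c \<sigma> = - (eta*G/2) * shift_weight q (map (\<lambda>j. \<sigma> j < m) [0..<n])" for \<sigma> :: "nat \<Rightarrow> nat"
  define C where "C = - (eta*G/2) * m * (1 + Q) / 2"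
  have "0 \<le> q" "q \<le> 1" "Q = q^m"
    using assms by (simp_all add: q_def Q_def)
  have "2 * C \<le> c \<sigma> + c (reverse_perm n \<sigma>)" if "\<sigma> permutes {..<n}" for \<sigma>
  proof -
    have "- (eta*G/2) * (real m * (1 + Q))
        \<le> - (eta*G/2) * (shift_weight q (map (\<lambda>j. \<sigma> j < m) [0..<n])
          + shift_weight q (map (\<lambda>j. reverse_perm n \<sigma> j < m) [0..<n]))"
      using shift_weight_reverse_perm_le[OF n that \<open>0 \<le> q\<close> \<open>q \<le> 1\<close>] assms
      by (intro mult_left_mono_neg) (auto simp: \<open>Q = q^m\<close>)
    then show ?thesis
      by (simp add: c_def C_def algebra_simps)
  qed
  moreover have "sgd_epoch n (hard_component m lam G) eta \<sigma> x = Q * x + c \<sigma>" if "\<sigma> permutes {..<n}" for \<sigma> x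
    using sgd_epoch_hard_component[OF n that] by (simp add: c_def q_def Q_def)
  ultimately have mean: "real (card (perm_seqs n k)) * (Q^k * (- G/(4*lam) + 1) + C * (\<Sum>s<k. Q^s))
      \<le> (\<Sum>ps\<in>perm_seqs n k. sgd_rr n (hard_component m lam G) eta ps (- G/(4*lam) + 1) k)"
    using \<open>0 \<le> q\<close> permutes_reverse_perm reverse_perm_reverse_perm
    by (intro sum_sgd_rr_ge[where \<rho>="reverse_perm n"]) (auto simp: \<open>Q = q^m\<close>)
  have "Q < 1"
    using assms \<open>0 \<le> q\<close> by (simp add: \<open>Q = q^m\<close> power_less_one_iff q_def)
  then have geometric: "Q^k * (- G/(4*lam) + 1) + C * (\<Sum>s<k. Q^s) + G/(4*lam)
      = Q^k + (1 - Q^k) * (G/(4*lam) - eta*G*m*(1 + Q) / (4*(1 - Q)))"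
    using \<open>0 < lam\<close> by (simp add: sum_gp_strict C_def field_simps)
  show ?thesis
    unfolding geometric[symmetric] sum.distrib using mean by (simp add: algebra_simps)
qed

text \<open>Either the initial distance has not yet been contracted (\<open>Q\<^sub>k \<ge> 1/2\<close>), or the step size
  is large, \<open>\<eta> \<ge> 1 / (4 \<lambda> m k)\<close>, and so is the bias \<open>d \<ge> \<eta> G / 8\<close>.\<close>
lemma min_le_half_lam_square:
  fixes lam G eta m k Qk d :: real
  assumes "0 < lam" "0 < G" "0 < eta" "1 \<le> m" "1 \<le> k" "0 \<le> Qk" "Qk \<le> 1"
    and "1 - 2*eta*lam*m*k \<le> Qk" "eta*G/8 \<le> d"
  shows "1/2048 * min lam (G^2 / (lam * (2*m*k)^2)) \<le> lam/2 * (Qk + (1 - Qk) * d)^2"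
proof -
  let ?T = "Qk + (1 - Qk) * d"
  have "0 < eta*G/8" using assms by simp
  then have "0 \<le> d" using assms by linarith
  show ?thesis
  proof (cases "1/2 \<le> Qk")
    case True
    have "0 \<le> (1 - Qk) * d" using \<open>0 \<le> d\<close> assms by simp
    then have "1/2 \<le> ?T" using True by linarith
    then have "(1/2)^2 \<le> ?T^2" by (intro power_mono) auto
    then have "lam/2 * (1/2)^2 \<le> lam/2 * ?T^2" using assms by (intro mult_left_mono) auto
    then have "lam/8 \<le> lam/2 * ?T^2" by (simp add: power2_eq_square)
    moreover have "min lam (G^2 / (lam * (2*m*k)^2)) \<le> lam" by simp
    ultimately show ?thesis using assms(1) by linarith
  next
    case False
    define z where "z = G / (64*lam*m*k)"
    have "0 < m*k" using assms by simp
    have "1 < eta * (4*lam*m*k)" using False assms by (simp add: algebra_simps)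
    then have "1 / (4*lam*m*k) < eta" using assms \<open>0 < m*k\<close> by (simp add: field_simps)
    then have "G/8 * (1 / (4*lam*m*k)) \<le> G/8 * eta" using assms by (intro mult_left_mono) auto
    moreover have "2*z = G/8 * (1 / (4*lam*m*k))" "G/8 * eta = eta*G/8" by (simp_all add: z_def field_simps)
    ultimately have "2*z \<le> d" using assms by linarith
    moreover have "0 \<le> z" using assms by (simp add: z_def)
    moreover have "(1/2) * d \<le> (1 - Qk) * d" using False \<open>0 \<le> d\<close> by (intro mult_right_mono) auto
    ultimately have "z^2 \<le> ?T^2" using assms by (intro power_mono) auto
    then have "lam/2 * z^2 \<le> lam/2 * ?T^2" using assms by (intro mult_left_mono) auto
    moreover have "lam/2 * z^2 = 1/2048 * (G^2 / (lam * (2*m*k)^2))"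
      using assms by (simp add: z_def field_simps power2_eq_square)
    moreover have "min lam (G^2 / (lam * (2*m*k)^2)) \<le> G^2 / (lam * (2*m*k)^2)" by simp
    ultimately show ?thesis by linarith
  qed
qed

lemma expectation_gap_hard_component_ge:
  fixes m k :: nat
  assumes n: "n = 2*m" and "0 < m" "0 < k" "0 < lam" "0 < G" "0 < eta"
    and eta: "eta \<le> 1 / (100 * lam * real n^2)"
  defines "f \<equiv> hard_component m lam G"
  shows "1/2048 * min lam (G^2 / (lam * (real n * real k)^2))
    \<le> measure_pmf.expectation (perm_seq_pmf n k)
         (\<lambda>ps. avg_fun n f (sgd_rr n f eta ps (- G/(4*lam) + 1) k) - (INF x. avg_fun n f x))"
proof -
  define Q where "Q = (1 - 2*eta*lam)^m"
  define d where "d = G/(4*lam) - eta*G*m*(1 + Q) / (4*(1 - Q))"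
  define T where "T = Q^k + (1 - Q^k) * d"
  define Y where "Y ps = sgd_rr n f eta ps (- G/(4*lam) + 1) k + G/(4*lam)" for ps
  have eta': "eta \<le> 1 / (400 * lam * real m^2)"
    using eta by (simp add: n field_simps power2_eq_square)
  have "1 \<le> real m^2" using \<open>0 < m\<close> by (simp add: one_le_power)
  then have "2 \<le> 400 * real m^2" by linarith
  then have "eta*lam * 2 \<le> eta*lam * (400 * real m^2)"
    by (rule mult_left_mono) (use assms in auto)
  moreover have "eta*lam * (400 * real m^2) \<le> 1"
    using eta' assms \<open>0 < m\<close> by (simp add: field_simps)
  ultimately have "2*eta*lam \<le> 1" by (simp add: algebra_simps)
  have "0 \<le> Q" "Q \<le> 1" using \<open>2*eta*lam \<le> 1\<close> assms by (simp_all add: Q_def power_le_one)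
  have Qk_lower: "1 - real (m*k) * (2*eta*lam) \<le> Q^k"
    using Bernoulli_inequality[of "-2*eta*lam" "m*k"] \<open>2*eta*lam \<le> 1\<close>
    by (simp add: Q_def power_mult)
  have bias: "eta*G/8 \<le> d"
    unfolding d_def Q_def using hard_component_bias_ge[OF assms(4,5,6,2) eta'] .
  have bound: "1/2048 * min lam (G^2 / (lam * (2*real m*real k)^2)) \<le> lam/2 * T^2"
    unfolding T_def using assms \<open>0 \<le> Q\<close> \<open>Q \<le> 1\<close> Qk_lower bias
    by (intro min_le_half_lam_square) (auto simp: power_le_one algebra_simps)
  have "0 \<le> eta*G/8" using assms by simp
  then have "0 \<le> T"
    unfolding T_def using bias \<open>0 \<le> Q\<close> \<open>Q \<le> 1\<close> by (simp add: power_le_one)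
  have "real (card (perm_seqs n k)) * T \<le> sum Y (perm_seqs n k)"
    unfolding T_def d_def Q_def Y_def f_def
    using sum_sgd_rr_hard_component_ge[OF n \<open>0 < m\<close> assms(4,5,6) \<open>2*eta*lam \<le> 1\<close>] .
  then have "real (card (perm_seqs n k)) * T^2 \<le> (\<Sum>ps\<in>perm_seqs n k. (Y ps)^2)"
    using \<open>0 \<le> T\<close> by (rule sum_squares_ge_of_sum_ge)
  then have "T^2 \<le> (\<Sum>ps\<in>perm_seqs n k. (Y ps)^2) / card (perm_seqs n k)"
    using card_perm_seqs_pos[of n k] by (simp add: pos_le_divide_eq mult.commute)
  then have "lam/2 * T^2 \<le> lam/2 * ((\<Sum>ps\<in>perm_seqs n k. (Y ps)^2) / card (perm_seqs n k))"
    using \<open>0 < lam\<close> by (intro mult_left_mono) auto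
  also have "\<dots> = measure_pmf.expectation (perm_seq_pmf n k)
      (\<lambda>ps. avg_fun n f (sgd_rr n f eta ps (- G/(4*lam) + 1) k) - (INF x. avg_fun n f x))"
  proof -
    note F_eq = avg_fun_hard_component_eq[OF n \<open>0 < m\<close> \<open>0 < lam\<close>, of G]
    have gap: "avg_fun n f x - (INF x. avg_fun n f x) = lam/2 * (x + G/(4*lam))^2" for x
      using F_eq[of x] INF_quadratic[OF F_eq \<open>0 < lam\<close>] by (simp add: f_def)
    show ?thesis
      unfolding expectation_perm_seq_pmf gap Y_def sum_distrib_left[symmetric] by simp
  qed
  finally show ?thesis
    using bound by (simp add: n)
qed

theorem proposition3:
  "\<exists>c::real. c > 0 \<and>
     (\<forall>(n::nat) (k::nat) (G::real) (lam::real).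
        even n \<and> n \<ge> 2 \<and> k > 1 \<and> lam > 0 \<and> G > 0 \<and> G \<ge> 4 * lam \<longrightarrow>
        (\<exists>(f::nat \<Rightarrow> real \<Rightarrow> real) (x0::real).
           assumption_A n lam G f x0 \<and>
           (\<forall>eta::real. 0 < eta \<and> eta \<le> 1 / (100 * lam * real n ^ 2) \<longrightarrow>
              measure_pmf.expectation (perm_seq_pmf n k)
                (\<lambda>ps. avg_fun n f (sgd_rr n f eta ps x0 k) - (INF x. avg_fun n f x))
              \<ge> c * min lam (G\<^sup>2 / (lam * (real n * real k)\<^sup>2)))))"
proof (intro exI[of _ "1/2048"] conjI allI impI)
  fix n k :: nat and G lam :: real
  assume H: "even n \<and> 2 \<le> n \<and> 1 < k \<and> 0 < lam \<and> 0 < G \<and> 4 * lam \<le> G"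
  then obtain m where n: "n = 2*m" and "0 < m" by (auto elim!: evenE)
  show "\<exists>f x0. assumption_A n lam G f x0 \<and>
      (\<forall>eta. 0 < eta \<and> eta \<le> 1 / (100 * lam * real n ^ 2) \<longrightarrow>
        measure_pmf.expectation (perm_seq_pmf n k)
          (\<lambda>ps. avg_fun n f (sgd_rr n f eta ps x0 k) - (INF x. avg_fun n f x))
        \<ge> 1/2048 * min lam (G\<^sup>2 / (lam * (real n * real k)\<^sup>2)))"
    using assumption_A_hard_component[OF n \<open>0 < m\<close>] expectation_gap_hard_component_ge[OF n \<open>0 < m\<close>] H
    by (intro exI[of _ "hard_component m lam G"] exI[of _ "- G/(4*lam) + 1"]) auto
qed simp

end
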